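(* Let $h$ be a bilinear form on $V$, $\bar h=\mathcal T(h)$ the associated endomorphism of $V$ (so $\langle\bar h(v),w\rangle=h(v,w)$), and $\widehat h$ the unique exterior algebra endomorphism of $\Lambda V$ extending $\bar h$ with $\widehat h(1)=1$, i.e. $\widehat h(v_1\wedge\cdots\wedge v_p)=\bar h(v_1)\wedge\cdots\wedge\bar h(v_p)$. Then $$\mathcal T(e^h)=\mathcal T\Big(\sum_{p\geq0}\frac{h^p}{p!}\Big)=\widehat h,$$ where $h^0=1$ and $h^p=0$ for $p>n$. In particular $\mathcal T\big(\frac{g^p}{p!}\big)=\mathrm{Id}_{\Lambda^pV}$.
   Context: $(V,g)$ is a Euclidean real vector space of dimension $n$, identified with $V^*$ via $g$. Double forms are elements of $\bigoplus_{p,q}\Lambda^pV^*\otimes\Lambda^qV^*$, a $(p,q)$ double form being viewed as a bilinear form on $\Lambda^pV\times\Lambda^qV$; bilinear forms on $V$ are $(1,1)$ double forms, and $g$ itself is one. Exterior product: $(\theta_1\otimes\theta_2)(\theta_3\otimes\theta_4)=(\theta_1\wedge\theta_3)\otimes(\theta_2\wedge\theta_4)$, extended bilinearly; $h^p$ is the $p$-th power for it. $\Lambda V$ carries the inner product induced by $g$. The linear isomorphism $\mathcal T$ from double forms to $L(\Lambda V,\Lambda V)$ is $\mathcal T(\omega_1\otimes\omega_2)(\theta)=\langle\omega_1^\sharp,\theta\rangle\omega_2^\sharp$, where $\omega^\sharp$ is the exterior vector dual to the form $\omega$; equivalently $\langle\mathcal T(\omega)u_1,u_2\rangle=\omega(u_1,u_2)$.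 *)

theory Defs
  imports Complex_Main
begin

text \<open>V is Euclidean n-space with orthonormal basis e_0,...,e_(n-1)
  (indices in {..<n}); V is identified with its dual via the inner product, so the dual
  basis is the same basis. Lambda V has orthonormal basis e_I (I a subset of {..<n}),
  e_I = e_(i1) wedge ... wedge e_(ip) for i1 < ... < ip. An exterior vector is given by
  its coefficient function nat set => real (only subsets of {..<n} are relevant).
  A double form is an element of Lambda V* tensor Lambda V*, given by its coefficients
  w(I,J) on the basis e_I tensor e_J; as a bilinear form it maps (u1,u2) to
  sum_(I,J) w(I,J) u1(I) u2(J).\<close>

definition sgn2 :: "nat set \<Rightarrow> nat set \<Rightarrow> real" where
  "sgn2 I K = (-1) ^ card {(i,k). i \<in> I \<and> k \<in> K \<and> k < i}"

text \<open>Exterior product on Lambda V: e_I wedge e_K = sgn2 I K e_(I union K) if I, K disjoint, else 0.\<close>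
definition ext_wedge :: "nat \<Rightarrow> (nat set \<Rightarrow> real) \<Rightarrow> (nat set \<Rightarrow> real) \<Rightarrow> (nat set \<Rightarrow> real)" where
  "ext_wedge n u w = (\<lambda>M. if M \<subseteq> {..<n}
      then (\<Sum>I\<in>Pow M. sgn2 I (M - I) * u I * w (M - I)) else 0)"

definition ext_one :: "nat set \<Rightarrow> real" where
  "ext_one = (\<lambda>I. if I = {} then 1 else 0)"

definition ext_wedge_list :: "nat \<Rightarrow> (nat set \<Rightarrow> real) list \<Rightarrow> (nat set \<Rightarrow> real)" where
  "ext_wedge_list n vs = foldr (ext_wedge n) vs ext_one"

definition ext_of_vec :: "nat \<Rightarrow> (nat \<Rightarrow> real) \<Rightarrow> (nat set \<Rightarrow> real)" where
  "ext_of_vec n v = (\<lambda>I. if (\<exists>i<n. I = {i}) then v (the_elem I) else 0)"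

definition basis_vec :: "nat \<Rightarrow> (nat \<Rightarrow> real)" where
  "basis_vec i = (\<lambda>j. if j = i then 1 else 0)"

text \<open>Exterior product of double forms:
  (e_I tensor e_J)(e_K tensor e_L) = (e_I wedge e_K) tensor (e_J wedge e_L).\<close>
definition dform_mult :: "nat \<Rightarrow> (nat set \<Rightarrow> nat set \<Rightarrow> real) \<Rightarrow> (nat set \<Rightarrow> nat set \<Rightarrow> real)
    \<Rightarrow> (nat set \<Rightarrow> nat set \<Rightarrow> real)" where
  "dform_mult n \<omega> \<eta> = (\<lambda>M N. if M \<subseteq> {..<n} \<and> N \<subseteq> {..<n}
      then (\<Sum>I\<in>Pow M. \<Sum>J\<in>Pow N. sgn2 I (M - I) * sgn2 J (N - J) * \<omega> I J * \<eta> (M - I) (N - J))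
      else 0)"

definition dform_one :: "nat set \<Rightarrow> nat set \<Rightarrow> real" where
  "dform_one = (\<lambda>I J. if I = {} \<and> J = {} then 1 else 0)"

primrec dform_pow :: "nat \<Rightarrow> (nat set \<Rightarrow> nat set \<Rightarrow> real) \<Rightarrow> nat \<Rightarrow> (nat set \<Rightarrow> nat set \<Rightarrow> real)" where
  "dform_pow n \<omega> 0 = dform_one"
| "dform_pow n \<omega> (Suc p) = dform_mult n (dform_pow n \<omega> p) \<omega>"

definition dform_of_bilin :: "nat \<Rightarrow> (nat \<Rightarrow> nat \<Rightarrow> real) \<Rightarrow> (nat set \<Rightarrow> nat set \<Rightarrow> real)" where
  "dform_of_bilin n h = (\<lambda>I J. if (\<exists>i<n. I = {i}) \<and> (\<exists>j<n. J = {j})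
      then h (the_elem I) (the_elem J) else 0)"

text \<open>e^w = sum_(p>=0) w^p/p!; all terms with p > n vanish, so the sum is taken over p <= n.\<close>
definition dform_exp :: "nat \<Rightarrow> (nat set \<Rightarrow> nat set \<Rightarrow> real) \<Rightarrow> (nat set \<Rightarrow> nat set \<Rightarrow> real)" where
  "dform_exp n \<omega> = (\<lambda>I J. \<Sum>p\<le>n. dform_pow n \<omega> p I J / fact p)"

text \<open>The isomorphism T: <T(w) u1, u2> = w(u1,u2), i.e. T(e_I tensor e_J)(u) = u(I) e_J.\<close>
definition Tmap :: "nat \<Rightarrow> (nat set \<Rightarrow> nat set \<Rightarrow> real) \<Rightarrow> (nat set \<Rightarrow> real) \<Rightarrow> (nat set \<Rightarrow> real)" where
  "Tmap n \<omega> u = (\<lambda>J. if J \<subseteq> {..<n} then (\<Sum>I\<in>Pow {..<n}. \<omega> I J * u I) else 0)"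

definition bilin_endo :: "nat \<Rightarrow> (nat \<Rightarrow> nat \<Rightarrow> real) \<Rightarrow> (nat \<Rightarrow> real) \<Rightarrow> (nat \<Rightarrow> real)" where
  "bilin_endo n h v = (\<lambda>j. if j < n then (\<Sum>i<n. h i j * v i) else 0)"

definition ext_hat :: "nat \<Rightarrow> (nat \<Rightarrow> nat \<Rightarrow> real) \<Rightarrow> (nat set \<Rightarrow> real) \<Rightarrow> (nat set \<Rightarrow> real)" where
  "ext_hat n h u = (\<lambda>J. \<Sum>I\<in>Pow {..<n}. u I *
      ext_wedge_list n (map (\<lambda>i. ext_of_vec n (bilin_endo n h (basis_vec i)))
                            (sorted_list_of_set I)) J)"

definition metric_g :: "nat \<Rightarrow> nat \<Rightarrow> real" where
  "metric_g = (\<lambda>i j. if i = j then 1 else 0)"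

end

theory Submission imports Defs begin

text \<open>The coefficient of \<open>\<widehat>h(e_M)\<close> at \<open>e_N\<close> is the minor of the matrix of \<open>h\<close> with
  rows \<open>M\<close> and columns \<open>N\<close>. Expanding \<open>h\<^sup>p\<^sup>+\<^sup>1 = h\<^sup>p h\<close> coefficientwise gives a double sum over
  a row \<open>m \<in> M\<close> and a column \<open>k \<in> N\<close> of \<open>h\<^sup>p(M - {m}, N - {k}) h(m,k)\<close>. By induction the first
  factor is \<open>p!\<close> times the complementary minor, and for fixed \<open>m\<close> the sum over \<open>k\<close> is the
  Laplace expansion of the \<open>(M,N)\<close> minor along row \<open>m\<close>, which comes from the anticommutativity
  of wedge products of vectors. So each of the \<open>|M|\<close> rows contributes the same amount and
  \<open>h\<^sup>p(M,N) = p! \<widehat>h(e_M)(N)\<close> when \<open>|M| = p\<close>, while \<open>h\<^sup>p(M,N) = 0\<close> otherwise. For \<open>h = g\<close> the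
  minors are Kronecker deltas.\<close>

lemma sgn2_Un_right:
  assumes "finite I" "finite K" "finite L" "K \<inter> L = {}"
  shows "sgn2 I (K \<union> L) = sgn2 I K * sgn2 I L"
proof -
  have split: "{(i,k). i \<in> I \<and> k \<in> K \<union> L \<and> k < i} =
    {(i,k). i \<in> I \<and> k \<in> K \<and> k < i} \<union> {(i,k). i \<in> I \<and> k \<in> L \<and> k < i}" by auto
  have "finite {(i,k). i \<in> I \<and> k \<in> K \<and> k < i}"
    by (rule finite_subset[of _ "I \<times> K"]) (use assms in auto)
  moreover have "finite {(i,k). i \<in> I \<and> k \<in> L \<and> k < i}"
    by (rule finite_subset[of _ "I \<times> L"]) (use assms in auto)
  ultimately show ?thesis
    unfolding sgn2_def split using assms(4) by (subst card_Un_disjoint) (auto simp: power_add)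
qed

lemma sgn2_Un_left:
  assumes "finite I" "finite J" "finite K" "I \<inter> J = {}"
  shows "sgn2 (I \<union> J) K = sgn2 I K * sgn2 J K"
proof -
  have split: "{(i,k). i \<in> I \<union> J \<and> k \<in> K \<and> k < i} =
    {(i,k). i \<in> I \<and> k \<in> K \<and> k < i} \<union> {(i,k). i \<in> J \<and> k \<in> K \<and> k < i}" by auto
  have "finite {(i,k). i \<in> I \<and> k \<in> K \<and> k < i}"
    by (rule finite_subset[of _ "I \<times> K"]) (use assms in auto)
  moreover have "finite {(i,k). i \<in> J \<and> k \<in> K \<and> k < i}"
    by (rule finite_subset[of _ "J \<times> K"]) (use assms in auto)
  ultimately show ?thesis
    unfolding sgn2_def split using assms(4) by (subst card_Un_disjoint) (auto simp: power_add)
qed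

lemma sgn2_singletons: "sgn2 {a} {b} = (if b < a then -1 else 1)"
proof -
  have "{(i,k). i \<in> {a} \<and> k \<in> {b} \<and> k < i} = (if b < a then {(a,b)} else {})" by auto
  then show ?thesis unfolding sgn2_def by simp
qed

lemma sgn2_empty_left [simp]: "sgn2 {} K = 1"
  unfolding sgn2_def by simp

lemma sgn2_empty_right [simp]: "sgn2 I {} = 1"
  unfolding sgn2_def by simp

lemma sgn2_mult_self: "sgn2 I K * sgn2 I K = 1"
  unfolding sgn2_def by (simp flip: power_add add: power_even_eq[symmetric] mult_2[symmetric])

lemma sgn2_singleton_least:
  assumes "\<And>s. s \<in> S \<Longrightarrow> m \<le> s"
  shows "sgn2 {m} S = 1"
proof -
  have no_inversions: "{(i,k). i \<in> {m} \<and> k \<in> S \<and> k < i} = {}" using assms by fastforce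
  show ?thesis unfolding sgn2_def no_inversions by simp
qed

lemma sgn2_singleton_swap:
  assumes "finite S" "x \<notin> S"
  shows "sgn2 S {x} * sgn2 {x} S = (-1) ^ card S"
  using assms
proof (induction S rule: finite_induct)
  case empty
  then show ?case by simp
next
  case (insert a S)
  have "sgn2 (insert a S) {x} * sgn2 {x} (insert a S) =
     (sgn2 {a} {x} * sgn2 {x} {a}) * (sgn2 S {x} * sgn2 {x} S)"
    using sgn2_Un_left[of "{a}" S "{x}"] sgn2_Un_right[of "{x}" "{a}" S] insert by simp
  also have "sgn2 {a} {x} * sgn2 {x} {a} = -1"
    using insert by (auto simp: sgn2_singletons)
  finally show ?case using insert by simp
qed

lemma sgn2_remove_two_swap:
  assumes "finite N" "k \<in> N" "l \<in> N" "k \<noteq> l"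
  shows "sgn2 {k} (N - {k}) * sgn2 {l} (N - {k} - {l}) =
    - (sgn2 {l} (N - {l}) * sgn2 {k} (N - {l} - {k}))"
proof -
  define R where "R = N - {k} - {l}"
  have fin: "finite R" using assms unfolding R_def by simp
  have "N - {k} = {l} \<union> R" "N - {l} = {k} \<union> R" using assms unfolding R_def by auto
  then have "sgn2 {k} (N - {k}) = sgn2 {k} {l} * sgn2 {k} R"
    and "sgn2 {l} (N - {l}) = sgn2 {l} {k} * sgn2 {l} R"
    using sgn2_Un_right[of "{k}" "{l}" R] sgn2_Un_right[of "{l}" "{k}" R] fin
    by (auto simp: R_def)
  moreover have "N - {l} - {k} = R" unfolding R_def by auto
  ultimately show ?thesis using assms(4) by (auto simp: R_def sgn2_singletons)
qed

lemma sum_Pow_singletons: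
  fixes n :: nat
  assumes "N \<subseteq> {..<n}"
  shows "(\<Sum>I\<in>Pow N. if \<exists>i<n. I = {i} then g I else 0) = (\<Sum>k\<in>N. g {k})"
proof -
  have fin: "finite N" using finite_subset[OF assms finite_lessThan] .
  have "(\<Sum>I\<in>Pow N. if \<exists>i<n. I = {i} then g I else 0) = (\<Sum>I\<in>(\<lambda>k. {k}) ` N. g I)"
    by (rule sum.mono_neutral_cong_right) (use fin assms in auto)
  also have "\<dots> = (\<Sum>k\<in>N. g {k})" by (subst sum.reindex) (auto simp: inj_on_def)
  finally show ?thesis .
qed

lemma sum_Pow_Diff: "finite M \<Longrightarrow> (\<Sum>I\<in>Pow M. f I) = (\<Sum>I\<in>Pow M. f (M - I))"
  by (rule sum.reindex_bij_witness[where i="\<lambda>I. M - I" and j="\<lambda>I. M - I"])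
    (auto simp: Diff_Diff_Int Int_absorb1)

lemma sum_Pow_Diff_singletons:
  fixes n :: nat and \<psi> :: "nat \<Rightarrow> real"
  assumes "N \<subseteq> {..<n}"
  shows "(\<Sum>J\<in>Pow N. \<phi> J * (if \<exists>j<n. N - J = {j} then \<psi> (the_elem (N - J)) else 0))
     = (\<Sum>k\<in>N. \<phi> (N - {k}) * \<psi> k)"
proof -
  have "finite N" using finite_subset[OF assms finite_lessThan] .
  then have "(\<Sum>J\<in>Pow N. \<phi> J * (if \<exists>j<n. N - J = {j} then \<psi> (the_elem (N - J)) else 0))
    = (\<Sum>J\<in>Pow N. if \<exists>j<n. J = {j} then \<phi> (N - J) * \<psi> (the_elem J) else 0)"
    by (subst sum_Pow_Diff) (auto simp: double_diff intro!: sum.cong)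
  also have "\<dots> = (\<Sum>k\<in>N. \<phi> (N - {k}) * \<psi> k)"
    by (simp add: sum_Pow_singletons[OF assms])
  finally show ?thesis .
qed

lemma sum_Diff_singleton_If:
  "finite N \<Longrightarrow> (\<Sum>l\<in>N - {k}. f l) = (\<Sum>l\<in>N. if l \<noteq> k then f l else 0)"
  by (simp add: sum.inter_filter[symmetric] set_diff_eq conj_commute)

lemma ext_wedge_outside: "\<not> N \<subseteq> {..<n} \<Longrightarrow> ext_wedge n v x N = 0"
  unfolding ext_wedge_def by simp

lemma ext_wedge_scale_right: "ext_wedge n v (\<lambda>N. c * x N) = (\<lambda>N. c * ext_wedge n v x N)"
  unfolding ext_wedge_def by (auto simp: sum_distrib_left ac_simps intro!: sum.cong)

lemma ext_wedge_vec:
  assumes "N \<subseteq> {..<n}"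
  shows "ext_wedge n (ext_of_vec n v) x N = (\<Sum>k\<in>N. sgn2 {k} (N - {k}) * v k * x (N - {k}))"
proof -
  have "ext_wedge n (ext_of_vec n v) x N =
     (\<Sum>I\<in>Pow N. sgn2 I (N - I) * (if \<exists>i<n. I = {i} then v (the_elem I) else 0) * x (N - I))"
    using assms unfolding ext_wedge_def ext_of_vec_def by simp
  also have "\<dots> =
     (\<Sum>I\<in>Pow N. if \<exists>i<n. I = {i} then sgn2 I (N - I) * v (the_elem I) * x (N - I) else 0)"
    by (rule sum.cong) auto
  finally show ?thesis by (simp add: sum_Pow_singletons[OF assms])
qed

lemma ext_wedge_vec_vec:
  assumes "N \<subseteq> {..<n}"
  shows "ext_wedge n (ext_of_vec n a) (ext_wedge n (ext_of_vec n b) x) N =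
    (\<Sum>k\<in>N. \<Sum>l\<in>N. if l \<noteq> k
       then a k * b l * (sgn2 {k} (N - {k}) * sgn2 {l} (N - {k} - {l}) * x (N - {k} - {l}))
       else 0)"
proof -
  have "finite N" "\<And>k. N - {k} \<subseteq> {..<n}" using finite_subset[OF assms finite_lessThan] assms by auto
  then show ?thesis
    unfolding ext_wedge_vec[OF assms] ext_wedge_vec[OF \<open>N - _ \<subseteq> _\<close>]
    by (auto simp: sum_distrib_left sum_Diff_singleton_If ac_simps intro!: sum.cong)
qed

lemma ext_wedge_vec_anticomm:
  "ext_wedge n (ext_of_vec n a) (ext_wedge n (ext_of_vec n b) x) =
   (\<lambda>N. - ext_wedge n (ext_of_vec n b) (ext_wedge n (ext_of_vec n a) x) N)"
proof
  fix N
  show "ext_wedge n (ext_of_vec n a) (ext_wedge n (ext_of_vec n b) x) N =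
    - ext_wedge n (ext_of_vec n b) (ext_wedge n (ext_of_vec n a) x) N"
  proof (cases "N \<subseteq> {..<n}")
    case False
    then show ?thesis by (simp add: ext_wedge_outside)
  next
    case True
    define G where "G k l = sgn2 {k} (N - {k}) * sgn2 {l} (N - {k} - {l}) * x (N - {k} - {l})"
      for k l
    have G_antisym: "G k l = - G l k" if "k \<in> N" "l \<in> N" "k \<noteq> l" for k l
    proof -
      have "N - {l} - {k} = N - {k} - {l}" by auto
      moreover have "finite N" using finite_subset[OF True finite_lessThan] .
      ultimately show ?thesis
        unfolding G_def using sgn2_remove_two_swap[of N k l] that by (simp add: algebra_simps)
    qed
    have "(\<Sum>k\<in>N. \<Sum>l\<in>N. if l \<noteq> k then a k * b l * G k l else 0) =
        (\<Sum>k\<in>N. \<Sum>l\<in>N. - (if k \<noteq> l then b l * a k * G l k else 0))"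
    proof (intro sum.cong refl)
      fix k l assume "k \<in> N" "l \<in> N"
      then show "(if l \<noteq> k then a k * b l * G k l else 0) =
          - (if k \<noteq> l then b l * a k * G l k else 0)"
        using G_antisym[of k l] by auto
    qed
    also have "\<dots> = - (\<Sum>l\<in>N. \<Sum>k\<in>N. if k \<noteq> l then b l * a k * G l k else 0)"
      by (subst sum.swap) (simp add: sum_negf)
    finally show ?thesis
      unfolding ext_wedge_vec_vec[OF True] G_def .
  qed
qed

abbreviation hbar_ext :: "nat \<Rightarrow> (nat \<Rightarrow> nat \<Rightarrow> real) \<Rightarrow> nat \<Rightarrow> (nat set \<Rightarrow> real)" where
  "hbar_ext n h i \<equiv> ext_of_vec n (bilin_endo n h (basis_vec i))"

definition ext_hat_basis :: "nat \<Rightarrow> (nat \<Rightarrow> nat \<Rightarrow> real) \<Rightarrow> nat set \<Rightarrow> (nat set \<Rightarrow> real)" where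
  "ext_hat_basis n h M = ext_wedge_list n (map (hbar_ext n h) (sorted_list_of_set M))"

lemma ext_hat_eq_sum_basis:
  "ext_hat n h u = (\<lambda>J. \<Sum>I\<in>Pow {..<n}. u I * ext_hat_basis n h I J)"
  unfolding ext_hat_def ext_hat_basis_def ..

lemma ext_hat_basis_empty [simp]: "ext_hat_basis n h {} = ext_one"
  unfolding ext_hat_basis_def ext_wedge_list_def by simp

lemma ext_hat_basis_Min:
  "finite M \<Longrightarrow> M \<noteq> {} \<Longrightarrow>
   ext_hat_basis n h M = ext_wedge n (hbar_ext n h (Min M)) (ext_hat_basis n h (M - {Min M}))"
  unfolding ext_hat_basis_def ext_wedge_list_def by (simp add: sorted_list_of_set_nonempty)

lemma bilin_endo_basis_vec: "m < n \<Longrightarrow> k < n \<Longrightarrow> bilin_endo n h (basis_vec m) k = h m k"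
  unfolding bilin_endo_def basis_vec_def by (simp add: if_distrib cong: if_cong)

lemma ext_hat_basis_support:
  assumes "M \<subseteq> {..<n}" "ext_hat_basis n h M N \<noteq> 0"
  shows "N \<subseteq> {..<n} \<and> card N = card M"
  using assms
proof (induction "card M" arbitrary: M N)
  case 0
  then have "M = {}" using finite_subset[OF _ finite_lessThan] by auto
  then show ?case using 0 by (auto simp: ext_one_def split: if_splits)
next
  case (Suc c)
  have fin: "finite M" using finite_subset[OF Suc.prems(1) finite_lessThan] .
  have ne: "M \<noteq> {}" using Suc.hyps by auto
  let ?m = "Min M"
  have W: "ext_hat_basis n h M N = ext_wedge n (hbar_ext n h ?m) (ext_hat_basis n h (M - {?m})) N"
    using ext_hat_basis_Min[OF fin ne] by simp
  have N: "N \<subseteq> {..<n}" using Suc.prems(2) W ext_wedge_outside by metis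
  then have "(\<Sum>k\<in>N. sgn2 {k} (N - {k}) * bilin_endo n h (basis_vec ?m) k *
      ext_hat_basis n h (M - {?m}) (N - {k})) \<noteq> 0"
    using Suc.prems(2) W ext_wedge_vec[OF N] by simp
  then obtain k where k: "k \<in> N" "ext_hat_basis n h (M - {?m}) (N - {k}) \<noteq> 0"
    by (metis (no_types, lifting) mult_zero_right sum.neutral)
  have "card (M - {?m}) = c" using Suc.hyps(2) fin ne by simp
  moreover have "N - {k} \<subseteq> {..<n} \<and> card (N - {k}) = card (M - {?m})"
    using Suc.hyps(1) Suc.prems(1) k(2) calculation by auto
  moreover have "card N = Suc (card (N - {k}))"
    using card_Suc_Diff1[OF finite_subset[OF N finite_lessThan] k(1)] by simp
  ultimately show ?case using N Suc.hyps(2) by simp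
qed

text \<open>Anticommutativity moves the factor of any \<open>m \<in> M\<close> to the front; the sign counts the
  elements of \<open>M\<close> below \<open>m\<close>.\<close>

lemma ext_hat_basis_remove:
  assumes "finite M" "m \<in> M"
  shows "ext_hat_basis n h M =
    (\<lambda>N. sgn2 {m} (M - {m}) * ext_wedge n (hbar_ext n h m) (ext_hat_basis n h (M - {m})) N)"
  using assms
proof (induction "card M" arbitrary: M rule: less_induct)
  case less
  have ne: "M \<noteq> {}" using less.prems by auto
  define m0 where "m0 = Min M"
  have m0M: "m0 \<in> M" and m0_le: "\<And>s. s \<in> M \<Longrightarrow> m0 \<le> s"
    unfolding m0_def using less.prems ne by simp_all
  show ?case
  proof (cases "m = m0")
    case True
    have "sgn2 {m} (M - {m}) = 1" using True m0_le by (intro sgn2_singleton_least) auto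
    then show ?thesis using ext_hat_basis_Min[OF less.prems(1) ne] True m0_def by simp
  next
    case False
    define M' where "M' = M - {m0}"
    have m': "m \<in> M'" and fin': "finite M'" and card': "card M' < card M"
      using False less.prems card_Diff1_less[OF less.prems(1) m0M] unfolding M'_def by auto
    have IH: "ext_hat_basis n h M' =
        (\<lambda>N. sgn2 {m} (M' - {m}) * ext_wedge n (hbar_ext n h m) (ext_hat_basis n h (M' - {m})) N)"
      by (rule less.hyps[OF card' fin' m'])
    have "ext_hat_basis n h (M - {m}) = ext_wedge n (hbar_ext n h (Min (M - {m})))
        (ext_hat_basis n h (M - {m} - {Min (M - {m})}))"
      by (rule ext_hat_basis_Min) (use less.prems m0M False in auto)
    moreover have "Min (M - {m}) = m0" "M - {m} - {m0} = M' - {m}"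
      using less.prems m0M m0_le False unfolding M'_def by (auto intro: Min_eqI)
    ultimately have rest: "ext_hat_basis n h (M - {m}) =
        ext_wedge n (hbar_ext n h m0) (ext_hat_basis n h (M' - {m}))"
      by simp
    have "M - {m} = {m0} \<union> (M' - {m})" "m0 < m"
      unfolding M'_def using m0M False m0_le[OF less.prems(2)] by auto
    then have sign: "sgn2 {m} (M - {m}) = - sgn2 {m} (M' - {m})"
      using sgn2_Un_right[of "{m}" "{m0}" "M' - {m}"] fin'
      by (simp add: sgn2_singletons M'_def)
    have "ext_hat_basis n h M = ext_wedge n (hbar_ext n h m0) (ext_hat_basis n h M')"
      using ext_hat_basis_Min[OF less.prems(1) ne] m0_def M'_def by simp
    also have "\<dots> = (\<lambda>N. sgn2 {m} (M' - {m}) * - ext_wedge n (hbar_ext n h m)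
        (ext_wedge n (hbar_ext n h m0) (ext_hat_basis n h (M' - {m}))) N)"
      unfolding IH ext_wedge_scale_right
        ext_wedge_vec_anticomm[of n "bilin_endo n h (basis_vec m0)" "bilin_endo n h (basis_vec m)"]
      by simp
    finally show ?thesis unfolding rest sign by simp
  qed
qed

lemma ext_hat_basis_row_expansion:
  assumes M: "M \<subseteq> {..<n}" and m: "m \<in> M" and N: "N \<subseteq> {..<n}"
  shows "(\<Sum>k\<in>N. sgn2 (N - {k}) {k} * ext_hat_basis n h (M - {m}) (N - {k}) * h m k)
     = sgn2 (M - {m}) {m} * ext_hat_basis n h M N"
proof -
  have fM: "finite M" using finite_subset[OF M finite_lessThan] .
  have fN: "finite N" using finite_subset[OF N finite_lessThan] .
  have below_n: "m < n" "\<And>k. k \<in> N \<Longrightarrow> k < n" using M m N by auto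
  have "sgn2 (M - {m}) {m} * ext_hat_basis n h M N =
     (sgn2 (M - {m}) {m} * sgn2 {m} (M - {m})) *
       (\<Sum>k\<in>N. sgn2 {k} (N - {k}) * h m k * ext_hat_basis n h (M - {m}) (N - {k}))"
    unfolding ext_hat_basis_remove[OF fM m] ext_wedge_vec[OF N]
    by (auto simp: bilin_endo_basis_vec below_n intro!: sum.cong)
  also have "\<dots> = (\<Sum>k\<in>N. (-1) ^ card (M - {m}) * sgn2 {k} (N - {k}) * h m k *
      ext_hat_basis n h (M - {m}) (N - {k}))"
    using sgn2_singleton_swap[of "M - {m}" m] fM by (simp add: sum_distrib_left mult.assoc)
  also have "\<dots> = (\<Sum>k\<in>N. sgn2 (N - {k}) {k} * ext_hat_basis n h (M - {m}) (N - {k}) * h m k)"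
  proof (rule sum.cong[OF refl])
    fix k assume "k \<in> N"
    show "(-1) ^ card (M - {m}) * sgn2 {k} (N - {k}) * h m k *
        ext_hat_basis n h (M - {m}) (N - {k}) =
      sgn2 (N - {k}) {k} * ext_hat_basis n h (M - {m}) (N - {k}) * h m k"
    proof (cases "ext_hat_basis n h (M - {m}) (N - {k}) = 0")
      case False
      \<comment> \<open>only terms with \<open>|N - {k}| = |M - {m}|\<close> survive, so the two signs agree\<close>
      then have "card (N - {k}) = card (M - {m})"
        using ext_hat_basis_support[of "M - {m}" n h "N - {k}"] M by auto
      moreover have "sgn2 (N - {k}) {k} =
          sgn2 (N - {k}) {k} * (sgn2 {k} (N - {k}) * sgn2 {k} (N - {k}))"
        by (simp add: sgn2_mult_self)
      ultimately have "sgn2 (N - {k}) {k} = (-1) ^ card (M - {m}) * sgn2 {k} (N - {k})"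
        using sgn2_singleton_swap[of "N - {k}" k] fN by (simp add: mult.assoc[symmetric])
      then show ?thesis by simp
    qed simp
  qed
  finally show ?thesis by simp
qed

lemma ext_hat_basis_sum_rows:
  assumes M: "M \<subseteq> {..<n}" and N: "N \<subseteq> {..<n}"
  shows "(\<Sum>m\<in>M. \<Sum>k\<in>N. sgn2 (M - {m}) {m} * sgn2 (N - {k}) {k} *
      ext_hat_basis n h (M - {m}) (N - {k}) * h m k) = card M * ext_hat_basis n h M N"
proof -
  have "(\<Sum>k\<in>N. sgn2 (M - {m}) {m} * sgn2 (N - {k}) {k} *
      ext_hat_basis n h (M - {m}) (N - {k}) * h m k) = ext_hat_basis n h M N" if "m \<in> M" for m
  proof -
    have "(\<Sum>k\<in>N. sgn2 (M - {m}) {m} * sgn2 (N - {k}) {k} *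
        ext_hat_basis n h (M - {m}) (N - {k}) * h m k) =
      sgn2 (M - {m}) {m} * (sgn2 (M - {m}) {m} * ext_hat_basis n h M N)"
      by (simp add: ext_hat_basis_row_expansion[OF M that N, symmetric] sum_distrib_left
          mult.assoc)
    then show ?thesis by (simp add: mult.assoc[symmetric] sgn2_mult_self)
  qed
  then show ?thesis by simp
qed

lemma dform_mult_bilin:
  assumes M: "M \<subseteq> {..<n}" and N: "N \<subseteq> {..<n}"
  shows "dform_mult n D (dform_of_bilin n h) M N =
    (\<Sum>m\<in>M. \<Sum>k\<in>N. sgn2 (M - {m}) {m} * sgn2 (N - {k}) {k} * D (M - {m}) (N - {k}) * h m k)"
proof -
  define \<psi> where "\<psi> I k = (if \<exists>i<n. M - I = {i} then h (the_elem (M - I)) k else 0)" for I k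
  have "dform_mult n D (dform_of_bilin n h) M N =
    (\<Sum>I\<in>Pow M. \<Sum>J\<in>Pow N. (sgn2 I (M - I) * sgn2 J (N - J) * D I J) *
        (if \<exists>j<n. N - J = {j} then \<psi> I (the_elem (N - J)) else 0))"
    unfolding dform_mult_def dform_of_bilin_def \<psi>_def using M N by (auto intro!: sum.cong)
  also have "\<dots> = (\<Sum>I\<in>Pow M. \<Sum>k\<in>N.
      (sgn2 I (M - I) * sgn2 (N - {k}) (N - (N - {k})) * D I (N - {k})) * \<psi> I k)"
    by (rule sum.cong[OF refl], rule sum_Pow_Diff_singletons[OF N])
  also have "\<dots> = (\<Sum>k\<in>N. \<Sum>I\<in>Pow M. (sgn2 (N - {k}) {k} * D I (N - {k}) * sgn2 I (M - I)) *
        (if \<exists>i<n. M - I = {i} then h (the_elem (M - I)) k else 0))"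
    by (subst sum.swap, intro sum.cong refl) (auto simp: \<psi>_def double_diff)
  also have "\<dots> = (\<Sum>k\<in>N. \<Sum>m\<in>M.
      sgn2 (N - {k}) {k} * D (M - {m}) (N - {k}) * sgn2 (M - {m}) {m} * h m k)"
    using M by (simp add: sum_Pow_Diff_singletons[OF M, where \<psi>="\<lambda>i. h i _"] double_diff
        insert_absorb)
  also have "\<dots> = (\<Sum>m\<in>M. \<Sum>k\<in>N.
      sgn2 (M - {m}) {m} * sgn2 (N - {k}) {k} * D (M - {m}) (N - {k}) * h m k)"
    by (subst sum.swap) (simp add: ac_simps)
  finally show ?thesis .
qed

lemma dform_pow_bilin:
  "dform_pow n (dform_of_bilin n h) p M N =
     (if M \<subseteq> {..<n} \<and> card M = p then fact p * ext_hat_basis n h M N else 0)"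
proof (induction p arbitrary: M N)
  case 0
  have "M = {}" if "M \<subseteq> {..<n}" "card M = 0"
    using that finite_subset[OF that(1) finite_lessThan] by simp
  then show ?case by (auto simp: dform_one_def ext_one_def split: if_splits)
next
  case (Suc p)
  consider "\<not> M \<subseteq> {..<n}" | "M \<subseteq> {..<n}" "\<not> N \<subseteq> {..<n}" | "M \<subseteq> {..<n}" "N \<subseteq> {..<n}"
    by blast
  then show ?case
  proof cases
    case 1
    then show ?thesis by (simp add: dform_mult_def)
  next
    case 2
    then show ?thesis using ext_hat_basis_support[of M n h N] by (auto simp: dform_mult_def)
  next
    case 3
    then have M: "M \<subseteq> {..<n}" and N: "N \<subseteq> {..<n}" by auto
    have Mm: "M - {m} \<subseteq> {..<n}" for m
      using M by auto
    have card_remove: "card (M - {m}) = card M - 1" if "m \<in> M" for m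
      using that by simp
    have "dform_pow n (dform_of_bilin n h) (Suc p) M N =
      (\<Sum>m\<in>M. \<Sum>k\<in>N. sgn2 (M - {m}) {m} * sgn2 (N - {k}) {k} *
         (if card (M - {m}) = p then fact p * ext_hat_basis n h (M - {m}) (N - {k}) else 0) * h m k)"
      using M by (simp add: dform_mult_bilin[OF M N] Suc.IH Mm)
    also have "\<dots> = (if card M = Suc p then fact (Suc p) * ext_hat_basis n h M N else 0)"
    proof (cases "card M = Suc p")
      case True
      then have card_p: "card (M - {m}) = p" if "m \<in> M" for m
        using card_remove[OF that] by simp
      have "(\<Sum>m\<in>M. \<Sum>k\<in>N. sgn2 (M - {m}) {m} * sgn2 (N - {k}) {k} *
          (if card (M - {m}) = p then fact p * ext_hat_basis n h (M - {m}) (N - {k}) else 0) * h m k)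
        = (\<Sum>m\<in>M. \<Sum>k\<in>N. fact p * (sgn2 (M - {m}) {m} * sgn2 (N - {k}) {k} *
            ext_hat_basis n h (M - {m}) (N - {k}) * h m k))"
        by (intro sum.cong refl) (simp only: card_p refl if_True mult_ac)
      also have "\<dots> = fact p * (card M * ext_hat_basis n h M N)"
        by (simp only: sum_distrib_left[symmetric] ext_hat_basis_sum_rows[OF M N])
      finally show ?thesis using True by simp
    next
      case False
      have "card (M - {m}) \<noteq> p" if "m \<in> M" for m
      proof -
        have "card M \<noteq> 0" using that finite_subset[OF M finite_lessThan] by auto
        then show ?thesis using card_remove[OF that] False by linarith
      qed
      then show ?thesis using False by simp
    qed
    finally show ?thesis using M by simp
  qed
qed

lemma ext_hat_basis_metric:
  assumes "I \<subseteq> {..<n}"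
  shows "ext_hat_basis n metric_g I N = (if N = I then 1 else 0)"
  using assms
proof (induction "card I" arbitrary: I N rule: less_induct)
  case less
  have fin: "finite I" using finite_subset[OF less.prems finite_lessThan] .
  show ?case
  proof (cases "I = {}")
    case True
    then show ?thesis by (simp add: ext_one_def)
  next
    case False
    define m0 where "m0 = Min I"
    have m0I: "m0 \<in> I" and m0_le: "\<And>s. s \<in> I \<Longrightarrow> m0 \<le> s"
      unfolding m0_def using fin False by simp_all
    have IH: "ext_hat_basis n metric_g (I - {m0}) N' = (if N' = I - {m0} then 1 else 0)" for N'
      using less.hyps[OF card_Diff1_less[OF fin m0I]] less.prems by blast
    have W: "ext_hat_basis n metric_g I N =
        ext_wedge n (hbar_ext n metric_g m0) (ext_hat_basis n metric_g (I - {m0})) N"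
      using ext_hat_basis_Min[OF fin False] m0_def by simp
    show ?thesis
    proof (cases "N \<subseteq> {..<n}")
      case False
      then show ?thesis using W ext_wedge_outside less.prems by auto
    next
      case True
      have "m0 < n" using m0I less.prems by auto
      then have "ext_hat_basis n metric_g I N = (\<Sum>k\<in>N. if k = m0 then
          sgn2 {k} (N - {k}) * (if N - {k} = I - {m0} then 1 else 0) else 0)"
        unfolding W ext_wedge_vec[OF True] IH
        using True by (intro sum.cong refl) (auto simp: bilin_endo_basis_vec metric_g_def)
      also have "\<dots> = (if m0 \<in> N \<and> N - {m0} = I - {m0} then sgn2 {m0} (I - {m0}) else 0)"
        using finite_subset[OF True finite_lessThan] by (auto simp: sum.delta)
      also have "\<dots> = (if N = I then 1 else 0)"
        using m0I m0_le sgn2_singleton_least[of "I - {m0}" m0] by auto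
      finally show ?thesis .
    qed
  qed
qed

lemma dform_exp_bilin:
  assumes "M \<subseteq> {..<n}"
  shows "dform_exp n (dform_of_bilin n h) M N = ext_hat_basis n h M N"
proof -
  have "dform_exp n (dform_of_bilin n h) M N =
      (\<Sum>p\<le>n. if card M = p then ext_hat_basis n h M N else 0)"
    unfolding dform_exp_def dform_pow_bilin using assms by (intro sum.cong refl) auto
  moreover have "card M \<le> n"
    using card_mono[OF finite_lessThan assms] by simp
  ultimately show ?thesis by simp
qed

lemma Tmap_dform_exp_bilin: "Tmap n (dform_exp n (dform_of_bilin n h)) = ext_hat n h"
proof (intro ext)
  fix u J
  show "Tmap n (dform_exp n (dform_of_bilin n h)) u J = ext_hat n h u J"
  proof (cases "J \<subseteq> {..<n}")
    case True
    then show ?thesis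
      unfolding Tmap_def ext_hat_eq_sum_basis by (auto simp: dform_exp_bilin mult.commute)
  next
    case False
    then have "ext_hat_basis n h I J = 0" if "I \<subseteq> {..<n}" for I
      using ext_hat_basis_support that by blast
    then show ?thesis
      using False unfolding Tmap_def ext_hat_eq_sum_basis by simp
  qed
qed

lemma Tmap_metric_pow:
  assumes "\<forall>I. u I \<noteq> 0 \<longrightarrow> I \<subseteq> {..<n} \<and> card I = p"
  shows "Tmap n (\<lambda>I J. dform_pow n (dform_of_bilin n metric_g) p I J / fact p) u = u"
proof
  fix J
  show "Tmap n (\<lambda>I J. dform_pow n (dform_of_bilin n metric_g) p I J / fact p) u J = u J"
  proof (cases "J \<subseteq> {..<n}")
    case False
    then show ?thesis using assms unfolding Tmap_def by auto
  next
    case True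
    have "Tmap n (\<lambda>I J. dform_pow n (dform_of_bilin n metric_g) p I J / fact p) u J =
        (\<Sum>I\<in>Pow {..<n}. if I = J then (if card J = p then u J else 0) else 0)"
      unfolding Tmap_def dform_pow_bilin if_P[OF True]
      by (rule sum.cong) (auto simp: ext_hat_basis_metric)
    also have "\<dots> = u J" using True assms by (auto simp: sum.delta')
    finally show ?thesis .
  qed
qed

theorem mainTheorem6:
  fixes n :: nat and h :: "nat \<Rightarrow> nat \<Rightarrow> real"
  shows "Tmap n (dform_exp n (dform_of_bilin n h)) = ext_hat n h
    \<and> (\<forall>p u. (\<forall>I. u I \<noteq> 0 \<longrightarrow> I \<subseteq> {..<n} \<and> card I = p) \<longrightarrow>
         Tmap n (\<lambda>I J. dform_pow n (dform_of_bilin n metric_g) p I J / fact p) u = u)"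
  using Tmap_dform_exp_bilin Tmap_metric_pow by blast

end
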